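(* Let $F:\mathbf{C}\rightleftarrows\mathbf{D}:G$ be an adjunction ($F$ left adjoint to $G$). (a) Assume that $\mathrm{Aut}(F(\mathcal{A}))=F(\mathrm{Aut}(\mathcal{A}))$ for every object $\mathcal{A}$ of $\mathbf{C}$. If $\mathbf{D}$ has the Ramsey property for objects, then so does $\mathbf{C}$. (b) Assume that $\mathrm{Aut}(G(\mathcal{B}))=G(\mathrm{Aut}(\mathcal{B}))$ for every object $\mathcal{B}$ of $\mathbf{D}$. If $\mathbf{C}$ has the dual Ramsey property for objects, then so does $\mathbf{D}$.
   Context: For objects $\mathcal{A},\mathcal{B}$ of a category, $\hom(\mathcal{A},\mathcal{B})$ is the set of morphisms $\mathcal{A}\to\mathcal{B}$; write $\mathcal{A}\to\mathcal{B}$ if it is nonempty. $\mathrm{Aut}(\mathcal{A})$ is the set of invertible morphisms $\mathcal{A}\to\mathcal{A}$, and $F(\mathrm{Aut}(\mathcal{A}))=\{F(\alpha):\alpha\in\mathrm{Aut}(\mathcal{A})\}$. On $\hom(\mathcal{A},\mathcal{B})$ let $f\sim_\mathcal{A} f'$ iff $f'=f\cdot\alpha$ for some $\alpha\in\mathrm{Aut}(\mathcal{A})$, and put $\binom{\mathcal{B}}{\mathcal{A}}=\hom(\mathcal{A},\mathcal{B})/\sim_\mathcal{A}$; for $w:\mathcal{B}\to\mathcal{C}$ set $w\cdot(f/\sim_\mathcal{A})=(w\cdot f)/\sim_\mathcal{A}$. A $k$-coloring of a set $S$ is a decomposition $S=\mathcal{M}_1\cup\dots\cup\mathcal{M}_k$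 into pairwise disjoint sets. For $k\ge2$, $\mathcal{C}\longrightarrow(\mathcal{B})^{\mathcal{A}}_k$ means $\mathcal{A}\to\mathcal{B}\to\mathcal{C}$ and for every $k$-coloring of $\binom{\mathcal{C}}{\mathcal{A}}$ there are $i$ and $w:\mathcal{B}\to\mathcal{C}$ with $w\cdot\binom{\mathcal{B}}{\mathcal{A}}\subseteq\mathcal{M}_i$. A category has the Ramsey property for objects if for every $k\ge2$ and all objects $\mathcal{A}\to\mathcal{B}$ there is an object $\mathcal{C}$ with $\mathcal{C}\longrightarrow(\mathcal{B})^{\mathcal{A}}_k$. A category $\mathbf{C}$ has the dual Ramsey property for objects if $\mathbf{C}^{\mathrm{op}}$ has the Ramsey property for objects. *)

theory Defs
  imports Main
begin

text \<open>A category is given by its object set, hom-sets, composition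
  (comp g f is "g after f", written g . f in the paper) and identities.\<close>
record ('o,'m) cat =
  Ob   :: "'o set"
  Hom  :: "'o \<Rightarrow> 'o \<Rightarrow> 'm set"
  comp :: "'m \<Rightarrow> 'm \<Rightarrow> 'm"
  idm  :: "'o \<Rightarrow> 'm"

definition is_category :: "('o,'m) cat \<Rightarrow> bool" where
  "is_category C \<longleftrightarrow>
     (\<forall>a\<in>Ob C. idm C a \<in> Hom C a a) \<and>
     (\<forall>a\<in>Ob C. \<forall>b\<in>Ob C. \<forall>c\<in>Ob C. \<forall>f\<in>Hom C a b. \<forall>g\<in>Hom C b c.
         comp C g f \<in> Hom C a c) \<and>
     (\<forall>a\<in>Ob C. \<forall>b\<in>Ob C. \<forall>c\<in>Ob C. \<forall>d\<in>Ob C. \<forall>f\<in>Hom C a b. \<forall>g\<in>Hom C b c.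
         \<forall>h\<in>Hom C c d. comp C h (comp C g f) = comp C (comp C h g) f) \<and>
     (\<forall>a\<in>Ob C. \<forall>b\<in>Ob C. \<forall>f\<in>Hom C a b.
         comp C (idm C b) f = f \<and> comp C f (idm C a) = f) \<and>
     (\<forall>a\<in>Ob C. \<forall>b\<in>Ob C. \<forall>a'\<in>Ob C. \<forall>b'\<in>Ob C.
         (a, b) \<noteq> (a', b') \<longrightarrow> Hom C a b \<inter> Hom C a' b' = {})"

definition op_cat :: "('o,'m) cat \<Rightarrow> ('o,'m) cat" where
  "op_cat C = \<lparr> Ob = Ob C, Hom = (\<lambda>a b. Hom C b a),
                comp = (\<lambda>g f. comp C f g), idm = idm C \<rparr>"

definition is_functor ::
  "('a,'f) cat \<Rightarrow> ('b,'g) cat \<Rightarrow> ('a \<Rightarrow> 'b) \<Rightarrow> ('f \<Rightarrow> 'g) \<Rightarrow> bool" where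
  "is_functor C D Fo Fm \<longleftrightarrow>
     (\<forall>a\<in>Ob C. Fo a \<in> Ob D) \<and>
     (\<forall>a\<in>Ob C. \<forall>b\<in>Ob C. \<forall>f\<in>Hom C a b. Fm f \<in> Hom D (Fo a) (Fo b)) \<and>
     (\<forall>a\<in>Ob C. \<forall>b\<in>Ob C. \<forall>c\<in>Ob C. \<forall>f\<in>Hom C a b. \<forall>g\<in>Hom C b c.
         Fm (comp C g f) = comp D (Fm g) (Fm f)) \<and>
     (\<forall>a\<in>Ob C. Fm (idm C a) = idm D (Fo a))"

definition is_adjunction ::
  "('a,'f) cat \<Rightarrow> ('b,'g) cat \<Rightarrow> ('a \<Rightarrow> 'b) \<Rightarrow> ('f \<Rightarrow> 'g)
   \<Rightarrow> ('b \<Rightarrow> 'a) \<Rightarrow> ('g \<Rightarrow> 'f) \<Rightarrow> ('a \<Rightarrow> 'b \<Rightarrow> 'g \<Rightarrow> 'f) \<Rightarrow> bool" where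
  "is_adjunction C D Fo Fm Go Gm phi \<longleftrightarrow>
     is_category C \<and> is_category D \<and>
     is_functor C D Fo Fm \<and> is_functor D C Go Gm \<and>
     (\<forall>A\<in>Ob C. \<forall>B\<in>Ob D.
         bij_betw (phi A B) (Hom D (Fo A) B) (Hom C A (Go B))) \<and>
     (\<forall>A\<in>Ob C. \<forall>A'\<in>Ob C. \<forall>B\<in>Ob D. \<forall>f\<in>Hom C A' A. \<forall>g\<in>Hom D (Fo A) B.
         phi A' B (comp D g (Fm f)) = comp C (phi A B g) f) \<and>
     (\<forall>A\<in>Ob C. \<forall>B\<in>Ob D. \<forall>B'\<in>Ob D. \<forall>g\<in>Hom D (Fo A) B. \<forall>h\<in>Hom D B B'.
         phi A B' (comp D h g) = comp C (Gm h) (phi A B g))"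

definition Aut :: "('o,'m) cat \<Rightarrow> 'o \<Rightarrow> 'm set" where
  "Aut C a = {\<alpha> \<in> Hom C a a. \<exists>\<beta>\<in>Hom C a a.
                 comp C \<alpha> \<beta> = idm C a \<and> comp C \<beta> \<alpha> = idm C a}"

definition arr :: "('o,'m) cat \<Rightarrow> 'o \<Rightarrow> 'o \<Rightarrow> bool" where
  "arr C a b \<longleftrightarrow> Hom C a b \<noteq> {}"

definition simrel :: "('o,'m) cat \<Rightarrow> 'o \<Rightarrow> 'o \<Rightarrow> ('m \<times> 'm) set" where
  "simrel C a b = {(f, f'). f \<in> Hom C a b \<and> f' \<in> Hom C a b \<and>
                     (\<exists>\<alpha>\<in>Aut C a. f' = comp C f \<alpha>)}"

definition binom :: "('o,'m) cat \<Rightarrow> 'o \<Rightarrow> 'o \<Rightarrow> 'm set set" where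
  "binom C b a = Hom C a b // simrel C a b"

text \<open>w \<cdot> binom(B,A) for w : B -> C', using w \<cdot> (f/\<sim>) = (w \<cdot> f)/\<sim>.\<close>
definition act_binom :: "('o,'m) cat \<Rightarrow> 'o \<Rightarrow> 'o \<Rightarrow> 'o \<Rightarrow> 'm \<Rightarrow> 'm set set" where
  "act_binom C a b c w = {simrel C a c `` {comp C w f} | f. f \<in> Hom C a b}"

definition coloring :: "nat \<Rightarrow> 'x set \<Rightarrow> (nat \<Rightarrow> 'x set) \<Rightarrow> bool" where
  "coloring k S M \<longleftrightarrow> (\<Union>i\<in>{1..k}. M i) = S \<and>
     (\<forall>i\<in>{1..k}. \<forall>j\<in>{1..k}. i \<noteq> j \<longrightarrow> M i \<inter> M j = {})"

definition ramsey_arrow :: "('o,'m) cat \<Rightarrow> 'o \<Rightarrow> 'o \<Rightarrow> 'o \<Rightarrow> nat \<Rightarrow> bool" where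
  "ramsey_arrow C c b a k \<longleftrightarrow> arr C a b \<and> arr C b c \<and>
     (\<forall>M. coloring k (binom C c a) M \<longrightarrow>
        (\<exists>i\<in>{1..k}. \<exists>w\<in>Hom C b c. act_binom C a b c w \<subseteq> M i))"

definition ramsey_property :: "('o,'m) cat \<Rightarrow> bool" where
  "ramsey_property C \<longleftrightarrow>
     (\<forall>k\<ge>2. \<forall>a\<in>Ob C. \<forall>b\<in>Ob C. arr C a b \<longrightarrow>
        (\<exists>c\<in>Ob C. ramsey_arrow C c b a k))"

definition dual_ramsey_property :: "('o,'m) cat \<Rightarrow> bool" where
  "dual_ramsey_property C \<longleftrightarrow> ramsey_property (op_cat C)"

end

theory Submission
  imports Defs
begin

text \<open>The adjunction identifies hom(F A, E) with hom(A, G E), naturally in A. Given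
  A \<rightarrow> B in C, take E with E \<longrightarrow> (F B)^(F A)_k in D; then G E \<longrightarrow> (B)^A_k.
  A colouring of binom(G E, A) is pulled back along phi to binom(E, F A); this is well
  defined on classes because every automorphism of F A is F of an automorphism of A, and
  naturality, phi (w \<cdot> F f) = phi w \<cdot> f, turns a monochromatic w \<cdot> binom(F B, F A) into a
  monochromatic phi w \<cdot> binom(B, A). Part (b) is part (a) for the opposite adjunction
  G^op -| F^op between D^op and C^op.\<close>

lemma category_idm: "is_category C \<Longrightarrow> a \<in> Ob C \<Longrightarrow> idm C a \<in> Hom C a a"
  unfolding is_category_def by auto

lemma category_comp_closed:
  "is_category C \<Longrightarrow> a \<in> Ob C \<Longrightarrow> b \<in> Ob C \<Longrightarrow> c \<in> Ob C \<Longrightarrow>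
   f \<in> Hom C a b \<Longrightarrow> g \<in> Hom C b c \<Longrightarrow> comp C g f \<in> Hom C a c"
  unfolding is_category_def by auto

lemma category_assoc:
  "is_category C \<Longrightarrow> a \<in> Ob C \<Longrightarrow> b \<in> Ob C \<Longrightarrow> c \<in> Ob C \<Longrightarrow> d \<in> Ob C \<Longrightarrow>
   f \<in> Hom C a b \<Longrightarrow> g \<in> Hom C b c \<Longrightarrow> h \<in> Hom C c d \<Longrightarrow>
   comp C h (comp C g f) = comp C (comp C h g) f"
  unfolding is_category_def by auto

lemma category_idm_left:
  "is_category C \<Longrightarrow> a \<in> Ob C \<Longrightarrow> b \<in> Ob C \<Longrightarrow> f \<in> Hom C a b \<Longrightarrow> comp C (idm C b) f = f"
  unfolding is_category_def by auto

lemma category_idm_right: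
  "is_category C \<Longrightarrow> a \<in> Ob C \<Longrightarrow> b \<in> Ob C \<Longrightarrow> f \<in> Hom C a b \<Longrightarrow> comp C f (idm C a) = f"
  unfolding is_category_def by auto

lemma category_hom_disjoint:
  "is_category C \<Longrightarrow> a \<in> Ob C \<Longrightarrow> b \<in> Ob C \<Longrightarrow> a' \<in> Ob C \<Longrightarrow> b' \<in> Ob C \<Longrightarrow>
   (a, b) \<noteq> (a', b') \<Longrightarrow> Hom C a b \<inter> Hom C a' b' = {}"
  unfolding is_category_def by auto

lemma functor_obj: "is_functor C D Fo Fm \<Longrightarrow> a \<in> Ob C \<Longrightarrow> Fo a \<in> Ob D"
  unfolding is_functor_def by blast

lemma functor_hom:
  "is_functor C D Fo Fm \<Longrightarrow> a \<in> Ob C \<Longrightarrow> b \<in> Ob C \<Longrightarrow> f \<in> Hom C a b \<Longrightarrow> Fm f \<in> Hom D (Fo a) (Fo b)"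
  unfolding is_functor_def by blast

lemma Aut_hom: "\<alpha> \<in> Aut C a \<Longrightarrow> \<alpha> \<in> Hom C a a"
  unfolding Aut_def by blast

lemma idm_in_Aut: "is_category C \<Longrightarrow> a \<in> Ob C \<Longrightarrow> idm C a \<in> Aut C a"
  unfolding Aut_def by (auto intro: category_idm dest: category_idm_left)

lemma Aut_inverse:
  "\<alpha> \<in> Aut C a \<Longrightarrow> \<exists>\<beta>\<in>Aut C a. comp C \<alpha> \<beta> = idm C a \<and> comp C \<beta> \<alpha> = idm C a"
  unfolding Aut_def by blast

lemma Aut_comp_closed:
  assumes C: "is_category C" and a: "a \<in> Ob C" and "\<alpha> \<in> Aut C a" "\<alpha>' \<in> Aut C a"
  shows "comp C \<alpha> \<alpha>' \<in> Aut C a"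
proof -
  obtain \<beta> \<beta>' where \<alpha>: "\<alpha> \<in> Hom C a a" "\<beta> \<in> Hom C a a"
      "comp C \<alpha> \<beta> = idm C a" "comp C \<beta> \<alpha> = idm C a"
    and \<alpha>': "\<alpha>' \<in> Hom C a a" "\<beta>' \<in> Hom C a a"
      "comp C \<alpha>' \<beta>' = idm C a" "comp C \<beta>' \<alpha>' = idm C a"
    using assms(3,4) unfolding Aut_def by blast
  note assoc = category_assoc[OF C a a a a] and closed = category_comp_closed[OF C a a a]
  have "comp C (comp C \<alpha> \<alpha>') (comp C \<beta>' \<beta>) = comp C \<alpha> (comp C (comp C \<alpha>' \<beta>') \<beta>)"
    using assoc \<alpha> \<alpha>' closed by metis
  also have "\<dots> = idm C a"
    using \<alpha> \<alpha>' category_idm_left[OF C a a] by simp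
  finally have right: "comp C (comp C \<alpha> \<alpha>') (comp C \<beta>' \<beta>) = idm C a" .
  have "comp C (comp C \<beta>' \<beta>) (comp C \<alpha> \<alpha>') = comp C \<beta>' (comp C (comp C \<beta> \<alpha>) \<alpha>')"
    using assoc \<alpha> \<alpha>' closed by metis
  also have "\<dots> = idm C a"
    using \<alpha> \<alpha>' category_idm_left[OF C a a] by simp
  finally have left: "comp C (comp C \<beta>' \<beta>) (comp C \<alpha> \<alpha>') = idm C a" .
  show ?thesis
    unfolding Aut_def using closed \<alpha> \<alpha>' right left by blast
qed

lemma equiv_simrel:
  assumes C: "is_category C" and a: "a \<in> Ob C" and b: "b \<in> Ob C"
  shows "equiv (Hom C a b) (simrel C a b)"
proof (rule equivI)
  show "simrel C a b \<subseteq> Hom C a b \<times> Hom C a b"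
    unfolding simrel_def by blast
  show "refl_on (Hom C a b) (simrel C a b)"
    unfolding simrel_def
    by (rule refl_onI)
      (auto intro!: bexI[OF _ idm_in_Aut[OF C a]] simp: category_idm_right[OF C a b])
  show "sym (simrel C a b)"
  proof (rule symI)
    fix f f' assume "(f, f') \<in> simrel C a b"
    then obtain \<alpha> where f: "f \<in> Hom C a b" "f' \<in> Hom C a b"
      and \<alpha>: "\<alpha> \<in> Aut C a" and f': "f' = comp C f \<alpha>"
      unfolding simrel_def by blast
    obtain \<beta> where \<beta>: "\<beta> \<in> Aut C a" "comp C \<alpha> \<beta> = idm C a"
      using Aut_inverse[OF \<alpha>] by blast
    have "comp C f' \<beta> = f"
      using f' \<beta> f category_assoc[OF C a a a b] category_idm_right[OF C a b]
        Aut_hom[OF \<alpha>] Aut_hom[OF \<beta>(1)] by metis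
    then show "(f', f) \<in> simrel C a b"
      unfolding simrel_def using f \<beta> by blast
  qed
  show "trans (simrel C a b)"
  proof (rule transI)
    fix f f' f'' assume "(f, f') \<in> simrel C a b" "(f', f'') \<in> simrel C a b"
    then obtain \<alpha> \<alpha>' where f: "f \<in> Hom C a b" "f'' \<in> Hom C a b"
      and \<alpha>: "\<alpha> \<in> Aut C a" "\<alpha>' \<in> Aut C a" and f'': "f'' = comp C (comp C f \<alpha>) \<alpha>'"
      unfolding simrel_def by blast
    have "f'' = comp C f (comp C \<alpha> \<alpha>')"
      using f'' category_assoc[OF C a a a b] Aut_hom \<alpha> f by metis
    then show "(f, f'') \<in> simrel C a b"
      unfolding simrel_def using f Aut_comp_closed[OF C a \<alpha>] by blast
  qed
qed

lemma coloring_vimage: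
  assumes "coloring k S M" and "h ` T \<subseteq> S"
  shows "coloring k T (\<lambda>i. {x \<in> T. h x \<in> M i})"
  using assms unfolding coloring_def by blast

lemma adjunctionD:
  assumes "is_adjunction C D Fo Fm Go Gm phi"
  shows "is_category C" "is_category D" "is_functor C D Fo Fm" "is_functor D C Go Gm"
  using assms unfolding is_adjunction_def by auto

lemma adjunction_bij:
  "is_adjunction C D Fo Fm Go Gm phi \<Longrightarrow> A \<in> Ob C \<Longrightarrow> B \<in> Ob D \<Longrightarrow>
   bij_betw (phi A B) (Hom D (Fo A) B) (Hom C A (Go B))"
  unfolding is_adjunction_def by auto

lemma adjunction_natural_left:
  "is_adjunction C D Fo Fm Go Gm phi \<Longrightarrow> A \<in> Ob C \<Longrightarrow> A' \<in> Ob C \<Longrightarrow> B \<in> Ob D \<Longrightarrow>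
   f \<in> Hom C A' A \<Longrightarrow> g \<in> Hom D (Fo A) B \<Longrightarrow>
   phi A' B (comp D g (Fm f)) = comp C (phi A B g) f"
  unfolding is_adjunction_def by auto

lemma adjunction_natural_right:
  "is_adjunction C D Fo Fm Go Gm phi \<Longrightarrow> A \<in> Ob C \<Longrightarrow> B \<in> Ob D \<Longrightarrow> B' \<in> Ob D \<Longrightarrow>
   g \<in> Hom D (Fo A) B \<Longrightarrow> h \<in> Hom D B B' \<Longrightarrow>
   phi A B' (comp D h g) = comp C (Gm h) (phi A B g)"
  unfolding is_adjunction_def by auto

lemma adjunction_hom:
  "is_adjunction C D Fo Fm Go Gm phi \<Longrightarrow> A \<in> Ob C \<Longrightarrow> B \<in> Ob D \<Longrightarrow>
   g \<in> Hom D (Fo A) B \<Longrightarrow> phi A B g \<in> Hom C A (Go B)"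
  by (rule bij_betw_apply[OF adjunction_bij])

lemma adjunction_simrel:
  assumes adj: "is_adjunction C D Fo Fm Go Gm phi"
    and a: "a \<in> Ob C" and E: "E \<in> Ob D" and aut: "Aut D (Fo a) \<subseteq> Fm ` Aut C a"
    and gg': "(g, g') \<in> simrel D (Fo a) E"
  shows "(phi a E g, phi a E g') \<in> simrel C a (Go E)"
proof -
  obtain \<alpha> where g: "g \<in> Hom D (Fo a) E" "g' \<in> Hom D (Fo a) E"
    and "\<alpha> \<in> Aut D (Fo a)" and g': "g' = comp D g \<alpha>"
    using gg' unfolding simrel_def by blast
  then obtain \<beta> where \<beta>: "\<beta> \<in> Aut C a" and "\<alpha> = Fm \<beta>"
    using aut by blast
  then have "phi a E g' = comp C (phi a E g) \<beta>"
    using adjunction_natural_left[OF adj a a E Aut_hom[OF \<beta>] g(1)] g' by simp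
  then show ?thesis
    unfolding simrel_def using adjunction_hom[OF adj a E] g \<beta> by blast
qed

lemma adjunction_binom_map:
  assumes adj: "is_adjunction C D Fo Fm Go Gm phi"
    and a: "a \<in> Ob C" and E: "E \<in> Ob D" and aut: "Aut D (Fo a) \<subseteq> Fm ` Aut C a"
  obtains lift where "lift ` binom D E (Fo a) \<subseteq> binom C (Go E) a"
    and "\<And>g. g \<in> Hom D (Fo a) E \<Longrightarrow>
           lift (simrel D (Fo a) E `` {g}) = simrel C a (Go E) `` {phi a E g}"
proof
  define S where "S = simrel D (Fo a) E"
  define cl where "cl g = simrel C a (Go E) `` {phi a E g}" for g
  have S: "equiv (Hom D (Fo a) E) S"
    unfolding S_def
    by (rule equiv_simrel[OF adjunctionD(2)[OF adj] functor_obj[OF adjunctionD(3)[OF adj] a] E])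
  have cl_respects: "cl respects S"
  proof (rule congruentI)
    fix g g' assume "(g, g') \<in> S"
    then show "cl g = cl g'"
      unfolding cl_def S_def
      by (rule equiv_class_eq[OF equiv_simrel[OF adjunctionD(1)[OF adj] a
            functor_obj[OF adjunctionD(4)[OF adj] E]] adjunction_simrel[OF adj a E aut]])
  qed
  have cl_binom: "cl g \<in> binom C (Go E) a" if "g \<in> Hom D (Fo a) E" for g
    unfolding cl_def binom_def using adjunction_hom[OF adj a E that] by (rule quotientI)
  show "(\<lambda>X. \<Union>g\<in>X. cl g) ` binom D E (Fo a) \<subseteq> binom C (Go E) a"
    using UN_equiv_class_type[OF S cl_respects] cl_binom unfolding binom_def S_def by (metis image_subsetI)
  show "(\<Union>g'\<in>simrel D (Fo a) E `` {g}. cl g') = cl g" if "g \<in> Hom D (Fo a) E" for g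
    using UN_equiv_class[OF S cl_respects that] unfolding S_def .
qed

lemma ramsey_arrow_right_adjoint:
  assumes adj: "is_adjunction C D Fo Fm Go Gm phi"
    and a: "a \<in> Ob C" and b: "b \<in> Ob C" and ab: "arr C a b" and E: "E \<in> Ob D"
    and aut: "Aut D (Fo a) \<subseteq> Fm ` Aut C a"
    and arrow: "ramsey_arrow D E (Fo b) (Fo a) k"
  shows "ramsey_arrow C (Go E) b a k"
  unfolding ramsey_arrow_def
proof (intro conjI allI impI)
  note D = adjunctionD(2)[OF adj] and F = adjunctionD(3)[OF adj]
  obtain lift where lift: "lift ` binom D E (Fo a) \<subseteq> binom C (Go E) a"
    and lift_class: "\<And>g. g \<in> Hom D (Fo a) E \<Longrightarrow>
           lift (simrel D (Fo a) E `` {g}) = simrel C a (Go E) `` {phi a E g}"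
    using adjunction_binom_map[OF adj a E aut] by blast
  show "arr C a b" by fact
  obtain w0 where "w0 \<in> Hom D (Fo b) E"
    using arrow unfolding ramsey_arrow_def arr_def by blast
  then show "arr C b (Go E)"
    using adjunction_hom[OF adj b E] unfolding arr_def by blast
  fix M assume "coloring k (binom C (Go E) a) M"
  then have "coloring k (binom D E (Fo a)) (\<lambda>i. {X \<in> binom D E (Fo a). lift X \<in> M i})"
    using lift by (rule coloring_vimage)
  then obtain i w where i: "i \<in> {1..k}" and w: "w \<in> Hom D (Fo b) E"
    and mono: "act_binom D (Fo a) (Fo b) E w \<subseteq> {X \<in> binom D E (Fo a). lift X \<in> M i}"
    using arrow unfolding ramsey_arrow_def by blast
  have "act_binom C a b (Go E) (phi b E w) \<subseteq> M i"
  proof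
    fix Y assume "Y \<in> act_binom C a b (Go E) (phi b E w)"
    then obtain f where f: "f \<in> Hom C a b" and Y: "Y = simrel C a (Go E) `` {comp C (phi b E w) f}"
      unfolding act_binom_def by blast
    let ?g = "comp D w (Fm f)"
    have "Y = lift (simrel D (Fo a) E `` {?g})"
      using Y adjunction_natural_left[OF adj b a E f w] lift_class
        category_comp_closed[OF D functor_obj[OF F a] functor_obj[OF F b] E functor_hom[OF F a b f] w]
      by simp
    moreover have "simrel D (Fo a) E `` {?g} \<in> act_binom D (Fo a) (Fo b) E w"
      unfolding act_binom_def using functor_hom[OF F a b f] by blast
    ultimately show "Y \<in> M i"
      using mono by blast
  qed
  then show "\<exists>i\<in>{1..k}. \<exists>w\<in>Hom C b (Go E). act_binom C a b (Go E) w \<subseteq> M i"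
    using i adjunction_hom[OF adj b E w] by blast
qed

lemma ramsey_property_adjunction:
  assumes adj: "is_adjunction C D Fo Fm Go Gm phi"
    and aut: "\<forall>A\<in>Ob C. Aut D (Fo A) = Fm ` Aut C A"
    and ramsey: "ramsey_property D"
  shows "ramsey_property C"
  unfolding ramsey_property_def
proof (intro allI impI ballI)
  fix k :: nat and a b
  assume k: "2 \<le> k" and a: "a \<in> Ob C" and b: "b \<in> Ob C" and ab: "arr C a b"
  note F = adjunctionD(3)[OF adj]
  have "arr D (Fo a) (Fo b)"
    using ab functor_hom[OF F a b] unfolding arr_def by blast
  then obtain E where "E \<in> Ob D" "ramsey_arrow D E (Fo b) (Fo a) k"
    using ramsey k functor_obj[OF F] a b unfolding ramsey_property_def by blast
  then show "\<exists>c\<in>Ob C. ramsey_arrow C c b a k"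
    using ramsey_arrow_right_adjoint[OF adj a b ab] aut a functor_obj[OF adjunctionD(4)[OF adj]]
    by blast
qed

lemma op_cat_simps [simp]:
  "Ob (op_cat C) = Ob C" "Hom (op_cat C) a b = Hom C b a"
  "comp (op_cat C) g f = comp C f g" "idm (op_cat C) = idm C"
  unfolding op_cat_def by simp_all

lemma is_category_op:
  assumes C: "is_category C"
  shows "is_category (op_cat C)"
  unfolding is_category_def op_cat_simps
proof (intro conjI ballI impI)
  fix a b c d f g h
  assume "a \<in> Ob C" "b \<in> Ob C" "c \<in> Ob C" "d \<in> Ob C"
    and "f \<in> Hom C b a" "g \<in> Hom C c b" "h \<in> Hom C d c"
  then show "comp C (comp C f g) h = comp C f (comp C g h)"
    using category_assoc[OF C] by metis
next
  fix a b a' b'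
  assume "a \<in> Ob C" "b \<in> Ob C" "a' \<in> Ob C" "b' \<in> Ob C" "(a, b) \<noteq> (a', b')"
  then show "Hom C b a \<inter> Hom C b' a' = {}"
    using category_hom_disjoint[OF C, of b a b' a'] by blast
qed (use category_idm[OF C] category_comp_closed[OF C] category_idm_left[OF C]
       category_idm_right[OF C] in auto)

lemma is_functor_op: "is_functor C D Fo Fm \<Longrightarrow> is_functor (op_cat C) (op_cat D) Fo Fm"
  unfolding is_functor_def by simp

lemma Aut_op: "Aut (op_cat C) a = Aut C a"
  unfolding Aut_def by auto

lemma is_adjunction_op:
  assumes adj: "is_adjunction C D Fo Fm Go Gm phi"
  shows "is_adjunction (op_cat D) (op_cat C) Go Gm Fo Fm (\<lambda>B A. inv_into (Hom D (Fo A) B) (phi A B))"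
proof -
  define psi where "psi A B = inv_into (Hom D (Fo A) B) (phi A B)" for A B
  note C = adjunctionD(1)[OF adj] and D = adjunctionD(2)[OF adj]
    and F = adjunctionD(3)[OF adj] and G = adjunctionD(4)[OF adj]
  have psi_bij: "bij_betw (psi A B) (Hom C A (Go B)) (Hom D (Fo A) B)"
    if "A \<in> Ob C" "B \<in> Ob D" for A B
    unfolding psi_def by (rule bij_betw_inv_into[OF adjunction_bij[OF adj that]])
  have psi_phi: "psi A B (phi A B h) = h"
    if "A \<in> Ob C" "B \<in> Ob D" "h \<in> Hom D (Fo A) B" for A B h
    unfolding psi_def by (rule bij_betw_inv_into_left[OF adjunction_bij[OF adj that(1,2)] that(3)])
  have psi_hom: "psi A B g \<in> Hom D (Fo A) B" and phi_psi: "phi A B (psi A B g) = g"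
    if "A \<in> Ob C" "B \<in> Ob D" "g \<in> Hom C A (Go B)" for A B g
    using bij_betw_apply[OF psi_bij[OF that(1,2)] that(3)]
      bij_betw_inv_into_right[OF adjunction_bij[OF adj that(1,2)] that(3)]
    unfolding psi_def by auto
  have natural_right: "psi A B' (comp C (Gm h) g) = comp D h (psi A B g)"
    if "A \<in> Ob C" "B \<in> Ob D" "B' \<in> Ob D" "h \<in> Hom D B B'" "g \<in> Hom C A (Go B)" for A B B' h g
  proof -
    have "comp C (Gm h) g = phi A B' (comp D h (psi A B g))"
      using adjunction_natural_right[OF adj that(1-3) psi_hom[OF that(1,2,5)] that(4)]
        phi_psi[OF that(1,2,5)] by simp
    then show ?thesis
      using psi_phi[OF that(1,3)] category_comp_closed[OF D functor_obj[OF F that(1)] that(2,3)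
          psi_hom[OF that(1,2,5)] that(4)] by simp
  qed
  have natural_left: "psi A' B (comp C g f) = comp D (psi A B g) (Fm f)"
    if "A \<in> Ob C" "A' \<in> Ob C" "B \<in> Ob D" "f \<in> Hom C A' A" "g \<in> Hom C A (Go B)" for A A' B f g
  proof -
    have "comp C g f = phi A' B (comp D (psi A B g) (Fm f))"
      using adjunction_natural_left[OF adj that(1-4) psi_hom[OF that(1,3,5)]]
        phi_psi[OF that(1,3,5)] by simp
    then show ?thesis
      using psi_phi[OF that(2,3)] category_comp_closed[OF D functor_obj[OF F that(2)]
          functor_obj[OF F that(1)] that(3) functor_hom[OF F that(2,1,4)] psi_hom[OF that(1,3,5)]]
      by simp
  qed
  show ?thesis
    unfolding psi_def[symmetric] is_adjunction_def op_cat_simps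
    using is_category_op[OF C] is_category_op[OF D] is_functor_op[OF F] is_functor_op[OF G]
      psi_bij natural_left natural_right by simp
qed

lemma dual_ramsey_property_adjunction:
  assumes adj: "is_adjunction C D Fo Fm Go Gm phi"
    and aut: "\<forall>B\<in>Ob D. Aut C (Go B) = Gm ` Aut D B"
    and ramsey: "dual_ramsey_property C"
  shows "dual_ramsey_property D"
  using ramsey_property_adjunction[OF is_adjunction_op[OF adj]] aut ramsey
  unfolding dual_ramsey_property_def by (simp add: Aut_op)

theorem lemma3p2:
  fixes C :: "('a,'f) cat" and D :: "('b,'g) cat"
    and Fo :: "'a \<Rightarrow> 'b" and Fm :: "'f \<Rightarrow> 'g"
    and Go :: "'b \<Rightarrow> 'a" and Gm :: "'g \<Rightarrow> 'f"
    and phi :: "'a \<Rightarrow> 'b \<Rightarrow> 'g \<Rightarrow> 'f"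
  assumes adj: "is_adjunction C D Fo Fm Go Gm phi"
  shows "((\<forall>A\<in>Ob C. Aut D (Fo A) = Fm ` Aut C A) \<longrightarrow>
            ramsey_property D \<longrightarrow> ramsey_property C)
       \<and> ((\<forall>B\<in>Ob D. Aut C (Go B) = Gm ` Aut D B) \<longrightarrow>
            dual_ramsey_property C \<longrightarrow> dual_ramsey_property D)"
  using ramsey_property_adjunction[OF adj] dual_ramsey_property_adjunction[OF adj] by blast

end
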